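(* Let $K$ be a field and let $T$ be a tree with $n\ge 1$ edges. Then its cut ideal $I_T$ is minimally generated by $2\cdot 4^{n-1} + 2^{n-1} - 3^n$ quadrics.
   Context: For a finite simple graph $G$ with vertex set $V(G)$ and edge set $E(G)$, an unordered partition $A|B$ of $V(G)$ (into two sets, one of which may be empty) defines the cut $Cut(A|B)$, the set of edges with one endpoint in $A$ and the other in $B$. The cut ideal $I_G$ is the kernel of the $K$-algebra homomorphism $\phi_G: K[q_{A|B} : A|B \text{ unordered partition of } V(G)] \to K[s_{ij}, t_{ij} : \{i,j\} \in E(G)]$, $q_{A|B} \mapsto \prod_{\{i,j\}\in Cut(A|B)} s_{ij} \prod_{\{i,j\}\in E(G)\setminus Cut(A|B)} t_{ij}$. For a tree with $n$ edges this polynomial ring has $2^n$ variables. *)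

theory Defs
  imports Main "HOL-Library.Poly_Mapping"
begin

definition simple_graph :: "'v set \<Rightarrow> 'v set set \<Rightarrow> bool" where
  "simple_graph V E \<longleftrightarrow> finite V \<and>
     (\<forall>e\<in>E. \<exists>u v. u \<noteq> v \<and> u \<in> V \<and> v \<in> V \<and> e = {u, v})"

definition adj :: "'v set set \<Rightarrow> 'v \<Rightarrow> 'v \<Rightarrow> bool" where
  "adj E u v \<longleftrightarrow> u \<noteq> v \<and> {u, v} \<in> E"

definition connected_graph :: "'v set \<Rightarrow> 'v set set \<Rightarrow> bool" where
  "connected_graph V E \<longleftrightarrow> (\<forall>u\<in>V. \<forall>v\<in>V. (adj E)\<^sup>*\<^sup>* u v)"

definition is_cycle :: "'v set set \<Rightarrow> 'v list \<Rightarrow> bool" where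
  "is_cycle E cs \<longleftrightarrow> length cs \<ge> 3 \<and> distinct cs \<and>
     (\<forall>i. Suc i < length cs \<longrightarrow> adj E (cs ! i) (cs ! Suc i)) \<and>
     adj E (last cs) (hd cs)"

definition is_tree :: "'v set \<Rightarrow> 'v set set \<Rightarrow> bool" where
  "is_tree V E \<longleftrightarrow> simple_graph V E \<and> V \<noteq> {} \<and> connected_graph V E \<and>
     \<not> (\<exists>cs. set cs \<subseteq> V \<and> is_cycle E cs)"

definition unordered_partitions :: "'v set \<Rightarrow> 'v set set set" where
  "unordered_partitions V = {{A, V - A} | A. A \<subseteq> V}"

definition cut :: "'v set set \<Rightarrow> 'v set set \<Rightarrow> 'v set set" where
  "cut E P = {e \<in> E. \<forall>X\<in>P. e \<inter> X \<noteq> {}}"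

type_synonym ('x, 'k) mpoly = "('x \<Rightarrow>\<^sub>0 nat) \<Rightarrow>\<^sub>0 'k"

definition mvar :: "'x \<Rightarrow> ('x, 'k::comm_ring_1) mpoly" where
  "mvar x = Poly_Mapping.single (Poly_Mapping.single x 1) 1"

definition poly_in :: "'x set \<Rightarrow> ('x, 'k::zero) mpoly \<Rightarrow> bool" where
  "poly_in X p \<longleftrightarrow> (\<forall>m\<in>Poly_Mapping.keys p. Poly_Mapping.keys m \<subseteq> X)"

definition mdeg :: "('x \<Rightarrow>\<^sub>0 nat) \<Rightarrow> nat" where
  "mdeg m = (\<Sum>x\<in>Poly_Mapping.keys m. Poly_Mapping.lookup m x)"

definition quadric :: "('x, 'k::zero) mpoly \<Rightarrow> bool" where
  "quadric p \<longleftrightarrow> p \<noteq> 0 \<and> (\<forall>m\<in>Poly_Mapping.keys p. mdeg m = 2)"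

definition peval :: "('x \<Rightarrow> ('y, 'k::comm_ring_1) mpoly) \<Rightarrow> ('x, 'k) mpoly \<Rightarrow> ('y, 'k) mpoly" where
  "peval img p = (\<Sum>m\<in>Poly_Mapping.keys p.
      Poly_Mapping.single 0 (Poly_Mapping.lookup p m) *
      (\<Prod>x\<in>Poly_Mapping.keys m. img x ^ Poly_Mapping.lookup m x))"

definition gen_ideal :: "'x set \<Rightarrow> ('x, 'k::comm_ring_1) mpoly set \<Rightarrow> ('x, 'k) mpoly set" where
  "gen_ideal X G = {p. \<exists>c. (\<forall>g\<in>G. poly_in X (c g)) \<and> p = (\<Sum>g\<in>G. c g * g)}"

definition minimally_generated_by_quadrics ::
    "'x set \<Rightarrow> ('x, 'k::comm_ring_1) mpoly set \<Rightarrow> nat \<Rightarrow> bool" where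
  "minimally_generated_by_quadrics X I N \<longleftrightarrow>
     (\<exists>G. finite G \<and> card G = N \<and> (\<forall>g\<in>G. quadric g \<and> poly_in X g) \<and> gen_ideal X G = I) \<and>
     (\<forall>G. finite G \<and> (\<forall>g\<in>G. poly_in X g) \<and> gen_ideal X G = I \<longrightarrow> N \<le> card G)"

text \<open>Variables of the target ring: (e, True) is s_e, (e, False) is t_e.\<close>
definition cut_image :: "'v set set \<Rightarrow> 'v set set \<Rightarrow> ('v set \<times> bool, 'k::comm_ring_1) mpoly" where
  "cut_image E P = (\<Prod>e\<in>cut E P. mvar (e, True)) * (\<Prod>e\<in>E - cut E P. mvar (e, False))"

definition cut_ideal :: "'v set \<Rightarrow> 'v set set \<Rightarrow> ('v set set, 'k::comm_ring_1) mpoly set" where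
  "cut_ideal V E = {p. poly_in (unordered_partitions V) p \<and>
                       peval (cut_image E :: 'v set set \<Rightarrow> ('v set \<times> bool, 'k) mpoly) p = 0}"

end

theory Submission
  imports Defs "HOL.Vector_Spaces" "HOL-Library.FuncSet"
begin

text \<open>For a tree the map \<open>A|B \<mapsto> Cut(A|B)\<close> is a bijection onto the subsets of \<open>E\<close>: cuts add
  under symmetric difference, every single edge is a cut, and a connected graph has no nontrivial
  empty cut. Indexing the variables by cuts \<open>S \<subseteq> E\<close>, the cut ideal is the kernel of
  \<open>q_S \<mapsto> \<Prod>(e \<in> S) s_e \<cdot> \<Prod>(e \<notin> S) t_e\<close>, and it is generated by the binomials
  \<open>q_S q_T - q_(S \<union> T) q_(S \<inter> T)\<close> with \<open>S\<close>, \<open>T\<close> incomparable: modulo these, every monomial can be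
  rewritten to contain the variable indexed by the union of its cuts, a union determined by the
  image, so induction on the degree connects any two monomials with the same image.
  As the ideal has no terms of degree below two, the quadratic parts of any generating set span
  these binomials, which are linearly independent because \<open>q_S q_T\<close> occurs in no other one.
  There are \<open>(4^n - 2 \<cdot> 3^n + 2^n) / 2\<close> of them.\<close>

section \<open>Cuts of a tree\<close>

lemma simple_graph_edgeE:
  assumes "simple_graph V E" "e \<in> E"
  obtains u v where "u \<noteq> v" "u \<in> V" "v \<in> V" "e = {u, v}"
  using assms unfolding simple_graph_def by blast

lemma simple_graph_finite_edges: "simple_graph V E \<Longrightarrow> finite E"
  unfolding simple_graph_def by (rule finite_subset[of E "Pow V"]) fastforce+

lemma cut_subset: "cut E P \<subseteq> E"
  unfolding cut_def by auto

lemma edge_in_cut_iff: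
  assumes "u \<in> V" "v \<in> V" "{u, v} \<in> E"
  shows "{u, v} \<in> cut E {A, V - A} \<longleftrightarrow> (u \<in> A \<longleftrightarrow> v \<notin> A)"
  using assms unfolding cut_def by auto

lemma cut_sym_diff:
  assumes "simple_graph V E"
  shows "cut E {sym_diff A B, V - sym_diff A B} = sym_diff (cut E {A, V - A}) (cut E {B, V - B})"
proof (rule set_eqI)
  fix e
  show "e \<in> cut E {sym_diff A B, V - sym_diff A B} \<longleftrightarrow> e \<in> sym_diff (cut E {A, V - A}) (cut E {B, V - B})"
  proof (cases "e \<in> E")
    case True
    then obtain u v where "u \<in> V" "v \<in> V" "e = {u, v}"
      using simple_graph_edgeE[OF assms] by metis
    then show ?thesis
      using True edge_in_cut_iff[of u V v E] by auto
  qed (auto simp: cut_def)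
qed

lemma connected_graph_cut_empty:
  assumes "simple_graph V E" "connected_graph V E" "C \<subseteq> V" "cut E {C, V - C} = {}"
  shows "C = {} \<or> C = V"
proof (rule ccontr)
  assume "\<not> (C = {} \<or> C = V)"
  then obtain u v where u: "u \<in> C" and v: "v \<in> V" "v \<notin> C"
    using assms(3) by blast
  have "(adj E)\<^sup>*\<^sup>* u v"
    using assms(2,3) u v unfolding connected_graph_def by blast
  then have "v \<in> C"
  proof (induction rule: rtranclp_induct)
    case (step y z)
    then have yz: "{y, z} \<in> E" unfolding adj_def by simp
    then have "y \<in> V" "z \<in> V"
      using simple_graph_edgeE[OF assms(1) yz] by (metis doubleton_eq_iff)+
    with step.IH yz assms(4) show ?case
      using edge_in_cut_iff[of y V z E C] by auto
  qed (use u in simp)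
  with v show False by blast
qed

lemma rtranclp_distinct_path:
  assumes "R\<^sup>*\<^sup>* a b"
  obtains xs where "xs \<noteq> []" "hd xs = a" "last xs = b" "distinct xs" "successively R xs"
  using assms
proof (induction arbitrary: thesis rule: converse_rtranclp_induct)
  case base
  show ?case by (rule base[of "[b]"]) auto
next
  case (step y z)
  obtain xs where xs: "xs \<noteq> []" "hd xs = z" "last xs = b" "distinct xs" "successively R xs"
    using step.IH by blast
  show ?case
  proof (cases "y \<in> set xs")
    case True
    then obtain ys zs where "xs = ys @ y # zs" by (meson split_list)
    with xs show ?thesis
      by (intro step.prems[of "y # zs"]) (auto simp: successively_append_iff)
  next
    case False
    with xs step.hyps(1) show ?thesis
      by (intro step.prems[of "y # xs"]) (cases xs; auto)+
  qed
qed

lemma successively_rtranclp_hd: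
  "successively R xs \<Longrightarrow> x \<in> set xs \<Longrightarrow> R\<^sup>*\<^sup>* (hd xs) x"
  by (induction xs rule: induct_list012) (auto intro: converse_rtranclp_into_rtranclp)

text \<open>A path from \<open>v\<close> to \<open>u\<close> avoiding the edge \<open>{u, v}\<close> would close a cycle with it.\<close>

lemma tree_remove_edge_disconnects:
  assumes tree: "is_tree V E" and uv: "u \<noteq> v" "v \<in> V" "{u, v} \<in> E"
  shows "\<not> (adj (E - {{u, v}}))\<^sup>*\<^sup>* v u"
proof
  let ?R = "adj (E - {{u, v}})"
  have sg: "simple_graph V E" using tree unfolding is_tree_def by blast
  assume "?R\<^sup>*\<^sup>* v u"
  then obtain xs where xs: "xs \<noteq> []" "hd xs = v" "last xs = u" "distinct xs" "successively ?R xs"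
    by (rule rtranclp_distinct_path)
  have step_in_V: "?R y z \<Longrightarrow> z \<in> V" for y z
    using simple_graph_edgeE[OF sg, of "{y, z}"] unfolding adj_def by (auto simp: doubleton_eq_iff)
  have "set xs \<subseteq> V"
  proof
    fix x assume "x \<in> set xs"
    then have "?R\<^sup>*\<^sup>* v x" using successively_rtranclp_hd[OF xs(5)] xs(2) by blast
    then show "x \<in> V" by (induction rule: rtranclp_induct) (use uv step_in_V in auto)
  qed
  moreover have "length xs \<ge> 3"
  proof -
    have "xs \<noteq> [v]" using xs(3) uv(1) by auto
    moreover have "xs \<noteq> [v, u]" using xs(5) by (auto simp: adj_def insert_commute)
    ultimately show ?thesis using xs(1-3)
      by (cases xs rule: remdups_adj.cases) (auto simp: Suc_le_eq)
  qed
  moreover have "successively (adj E) xs"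
    using xs(5) by (rule successively_mono) (auto simp: adj_def)
  then have "\<forall>i. Suc i < length xs \<longrightarrow> adj E (xs ! i) (xs ! Suc i)"
    using successively_nth by blast
  moreover have "adj E (last xs) (hd xs)"
    using xs(2,3) uv by (simp add: adj_def insert_commute)
  ultimately have "is_cycle E xs" using xs(4) unfolding is_cycle_def by blast
  with \<open>set xs \<subseteq> V\<close> tree show False unfolding is_tree_def by blast
qed

text \<open>The side of the cut is the component of \<open>v\<close> in the tree with the edge removed.\<close>

lemma tree_edge_is_cut:
  assumes tree: "is_tree V E" and e: "e \<in> E"
  shows "\<exists>C\<subseteq>V. cut E {C, V - C} = {e}"
proof -
  have sg: "simple_graph V E" using tree unfolding is_tree_def by blast
  obtain u v where uv: "u \<noteq> v" "u \<in> V" "v \<in> V" "e = {u, v}"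
    using simple_graph_edgeE[OF sg e] by blast
  define R where "R = adj (E - {e})"
  define C where "C = {w \<in> V. R\<^sup>*\<^sup>* v w}"
  have "u \<notin> C"
    using tree_remove_edge_disconnects[OF tree uv(1,3)] e uv(4) unfolding C_def R_def by simp
  moreover have "v \<in> C" using uv(3) unfolding C_def by simp
  moreover have same_side: "(a \<in> C) = (b \<in> C)" if "{a, b} \<in> E - {e}" "a \<noteq> b" "a \<in> V" "b \<in> V" for a b
  proof -
    have "R a b" "R b a" using that by (auto simp: R_def adj_def insert_commute)
    with that show ?thesis unfolding C_def by (simp, meson rtranclp.rtrancl_into_rtrancl)
  qed
  ultimately have "cut E {C, V - C} = {e}"
  proof (intro set_eqI iffI)
    fix f assume f: "f \<in> cut E {C, V - C}"
    then have "f \<in> E" using cut_subset by blast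
    then obtain a b where ab: "a \<noteq> b" "a \<in> V" "b \<in> V" "f = {a, b}"
      using simple_graph_edgeE[OF sg] by blast
    with f \<open>f \<in> E\<close> have "(a \<in> C) \<noteq> (b \<in> C)"
      using edge_in_cut_iff[of a V b E C] by auto
    with same_side ab \<open>f \<in> E\<close> show "f \<in> {e}" by blast
  next
    fix f assume "f \<in> {e}"
    with e uv \<open>u \<notin> C\<close> \<open>v \<in> C\<close> show "f \<in> cut E {C, V - C}"
      using edge_in_cut_iff[of u V v E C] by auto
  qed
  moreover have "C \<subseteq> V" unfolding C_def by blast
  ultimately show ?thesis by blast
qed

lemma tree_cut_surj:
  assumes tree: "is_tree V E" and "F \<subseteq> E"
  shows "\<exists>A\<subseteq>V. cut E {A, V - A} = F"
proof -
  have sg: "simple_graph V E" using tree unfolding is_tree_def by blast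
  have "finite F" using assms(2) simple_graph_finite_edges[OF sg] finite_subset by blast
  then show ?thesis using assms(2)
  proof (induction rule: finite_subset_induct)
    case empty
    show ?case by (intro exI[of _ "{}"]) (auto simp: cut_def)
  next
    case (insert e F)
    obtain A C where "A \<subseteq> V" "cut E {A, V - A} = F" "C \<subseteq> V" "cut E {C, V - C} = {e}"
      using insert.IH tree_edge_is_cut[OF tree insert.hyps(2)] by blast
    with \<open>e \<notin> F\<close> show ?case
      using cut_sym_diff[OF sg, of A C] by (intro exI[of _ "sym_diff A C"]) auto
  qed
qed

theorem tree_bij_betw_cut:
  assumes tree: "is_tree V E"
  shows "bij_betw (cut E) (unordered_partitions V) (Pow E)"
proof (rule bij_betw_imageI)
  have sg: "simple_graph V E" and con: "connected_graph V E"
    using tree unfolding is_tree_def by blast+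
  show "inj_on (cut E) (unordered_partitions V)"
  proof (rule inj_onI)
    fix P Q assume "P \<in> unordered_partitions V" "Q \<in> unordered_partitions V" "cut E P = cut E Q"
    then obtain A B where AB: "A \<subseteq> V" "P = {A, V - A}" "B \<subseteq> V" "Q = {B, V - B}"
      and "cut E {A, V - A} = cut E {B, V - B}"
      unfolding unordered_partitions_def by blast
    then have "cut E {sym_diff A B, V - sym_diff A B} = {}"
      using cut_sym_diff[OF sg, of A B] by simp
    moreover have "sym_diff A B \<subseteq> V" using AB by blast
    ultimately have "sym_diff A B = {} \<or> sym_diff A B = V"
      by (rule connected_graph_cut_empty[OF sg con, rotated])
    then have "B = A \<or> B = V - A" using AB by blast
    then show "P = Q" using AB by (auto simp: double_diff)
  qed
  show "cut E ` unordered_partitions V = Pow E"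
  proof
    show "cut E ` unordered_partitions V \<subseteq> Pow E" using cut_subset by blast
    show "Pow E \<subseteq> cut E ` unordered_partitions V"
    proof
      fix F assume "F \<in> Pow E"
      then obtain A where "A \<subseteq> V" "cut E {A, V - A} = F" using tree_cut_surj[OF tree] by blast
      then show "F \<in> cut E ` unordered_partitions V" unfolding unordered_partitions_def by blast
    qed
  qed
qed

section \<open>Chains and incomparable pairs of subsets\<close>

lemma card_subset_chains:
  assumes "finite E"
  shows "card {(S, T). S \<subseteq> T \<and> T \<subseteq> E} = 3 ^ card E"
proof -
  define level :: "'a set \<times> 'a set \<Rightarrow> 'a \<Rightarrow> nat"
    where "level = (\<lambda>(S, T). restrict (\<lambda>e. of_bool (e \<in> S) + of_bool (e \<in> T)) E)"
  have "bij_betw level {(S, T). S \<subseteq> T \<and> T \<subseteq> E} (E \<rightarrow>\<^sub>E {0, 1, 2})"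
  proof (rule bij_betw_byWitness[where f' = "\<lambda>\<phi>. ({e \<in> E. \<phi> e = 2}, {e \<in> E. \<phi> e \<noteq> 0})"])
    show "\<forall>\<phi>\<in>E \<rightarrow>\<^sub>E {0, 1, 2}. level ({e \<in> E. \<phi> e = 2}, {e \<in> E. \<phi> e \<noteq> 0}) = \<phi>"
      by (force simp: level_def PiE_iff extensional_def)
  qed (auto simp: level_def)
  then show ?thesis
    using assms by (simp add: bij_betw_same_card card_PiE numeral_3_eq_3)
qed

text \<open>Inclusion-exclusion: the comparable pairs are the chains \<open>S \<subseteq> T\<close>, the chains
  \<open>T \<subseteq> S\<close>, overlapping in the diagonal.\<close>

lemma card_incomparable_subset_pairs:
  assumes "finite E"
  shows "card {(S, T). S \<subseteq> E \<and> T \<subseteq> E \<and> \<not> S \<subseteq> T \<and> \<not> T \<subseteq> S} + 2 * 3 ^ card E =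
         4 ^ card E + 2 ^ card E"
proof -
  define chains where "chains = {(S, T). S \<subseteq> T \<and> T \<subseteq> E}"
  let ?comparable = "chains \<union> prod.swap ` chains"
  have finite: "finite chains" "finite (prod.swap ` chains)"
    using assms unfolding chains_def by (auto intro: finite_subset[of _ "Pow E \<times> Pow E"])
  have "chains \<inter> prod.swap ` chains = (\<lambda>S. (S, S)) ` Pow E"
    unfolding chains_def by auto
  then have "card (chains \<inter> prod.swap ` chains) = 2 ^ card E"
    using assms by (simp add: card_image inj_on_def card_Pow)
  moreover have "card chains = 3 ^ card E" "card (prod.swap ` chains) = 3 ^ card E"
    using card_subset_chains[OF assms] by (simp_all add: chains_def card_image)
  ultimately have comparable: "card ?comparable + 2 ^ card E = 2 * 3 ^ card E"
    using card_Un_Int[OF finite] by simp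
  have "{(S, T). S \<subseteq> E \<and> T \<subseteq> E \<and> \<not> S \<subseteq> T \<and> \<not> T \<subseteq> S} = Pow E \<times> Pow E - ?comparable"
    unfolding chains_def by auto
  moreover have "?comparable \<subseteq> Pow E \<times> Pow E"
    unfolding chains_def by auto
  moreover have "card (Pow E \<times> Pow E) = 4 ^ card E"
    using assms by (simp add: card_cartesian_product card_Pow power_mult_distrib[symmetric])
  ultimately show ?thesis
    using comparable assms card_Diff_subset[of ?comparable "Pow E \<times> Pow E"] card_mono[of "Pow E \<times> Pow E"]
    by (simp add: finite)
qed

section \<open>Polynomials\<close>

text \<open>The simplifier rewrites \<open>1 :: nat\<close> to \<open>Suc 0\<close>, so simplification rules about \<open>monomial\<close> on
  exponent vectors are applied by unfolding them first.\<close>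

abbreviation monomial :: "'a \<Rightarrow> 'a \<Rightarrow>\<^sub>0 'b::zero_neq_one" where
  "monomial a \<equiv> Poly_Mapping.single a 1"

lemma keys_add_nat: "Poly_Mapping.keys (m + m') = Poly_Mapping.keys m \<union> Poly_Mapping.keys (m' :: 'a \<Rightarrow>\<^sub>0 nat)"
  by (auto simp: in_keys_iff lookup_add)

lemma poly_mapping_sum_single:
  "p = (\<Sum>a\<in>Poly_Mapping.keys p. Poly_Mapping.single a (Poly_Mapping.lookup p a))"
  by (rule poly_mapping_eqI) (simp add: lookup_sum lookup_single when_def in_keys_iff)

lemma lookup_single_0_mult:
  "Poly_Mapping.lookup (Poly_Mapping.single 0 c * p) m = c * Poly_Mapping.lookup p m"
  by (simp add: mult_map_scale_conv_mult[symmetric] map.rep_eq when_def)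

text \<open>For additive \<open>f\<close> this is the ring homomorphism of a monomial substitution.\<close>

definition map_monomials :: "('a \<Rightarrow> 'b) \<Rightarrow> ('a \<Rightarrow>\<^sub>0 'c::comm_monoid_add) \<Rightarrow> 'b \<Rightarrow>\<^sub>0 'c" where
  "map_monomials f p =
     (\<Sum>m\<in>Poly_Mapping.keys p. Poly_Mapping.single (f m) (Poly_Mapping.lookup p m))"

lemma lookup_map_monomials:
  "Poly_Mapping.lookup (map_monomials f p) n =
     (\<Sum>m\<in>Poly_Mapping.keys p. if f m = n then Poly_Mapping.lookup p m else 0)"
  unfolding map_monomials_def by (simp add: lookup_sum lookup_single when_def)

lemma map_monomials_superset:
  assumes "finite S" "Poly_Mapping.keys p \<subseteq> S"
  shows "map_monomials f p = (\<Sum>m\<in>S. Poly_Mapping.single (f m) (Poly_Mapping.lookup p m))"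
  unfolding map_monomials_def using assms
  by (intro sum.mono_neutral_left) (auto simp: in_keys_iff)

lemma map_monomials_zero [simp]: "map_monomials f 0 = 0"
  unfolding map_monomials_def by simp

lemma map_monomials_single [simp]:
  "map_monomials f (Poly_Mapping.single m c) = Poly_Mapping.single (f m) c"
  unfolding map_monomials_def by simp

lemma map_monomials_add: "map_monomials f (p + q) = map_monomials f p + map_monomials f q"
proof -
  let ?S = "Poly_Mapping.keys p \<union> Poly_Mapping.keys q"
  have "map_monomials f (p + q) = (\<Sum>m\<in>?S. Poly_Mapping.single (f m) (Poly_Mapping.lookup (p + q) m))"
    using keys_add[of p q] by (intro map_monomials_superset) auto
  also have "\<dots> = map_monomials f p + map_monomials f q"
    by (simp add: lookup_add single_add sum.distrib map_monomials_superset[of ?S])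
  finally show ?thesis .
qed

lemma map_monomials_sum: "map_monomials f (\<Sum>i\<in>I. p i) = (\<Sum>i\<in>I. map_monomials f (p i))"
  by (induction I rule: infinite_finite_induct) (auto simp: map_monomials_add)

lemma map_monomials_diff:
  "map_monomials f (p - q) = map_monomials f p - map_monomials f (q :: _ \<Rightarrow>\<^sub>0 'c::ab_group_add)"
  using map_monomials_add[of f "p - q" q] by (simp add: eq_diff_eq)

lemma map_monomials_mult:
  fixes p q :: "'a::monoid_add \<Rightarrow>\<^sub>0 'c::comm_semiring_1"
  assumes additive: "\<And>a b. f (a + b) = f a + f b"
  shows "map_monomials f (p * q) = map_monomials f p * map_monomials f q"
proof -
  have "p * q = (\<Sum>a\<in>Poly_Mapping.keys p. \<Sum>b\<in>Poly_Mapping.keys q.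
      Poly_Mapping.single (a + b) (Poly_Mapping.lookup p a * Poly_Mapping.lookup q b))"
    by (subst (1 2) poly_mapping_sum_single) (simp add: sum_product mult_single)
  then have "map_monomials f (p * q) = (\<Sum>a\<in>Poly_Mapping.keys p. \<Sum>b\<in>Poly_Mapping.keys q.
      Poly_Mapping.single (f a + f b) (Poly_Mapping.lookup p a * Poly_Mapping.lookup q b))"
    by (simp add: map_monomials_sum additive)
  also have "\<dots> = map_monomials f p * map_monomials f q"
    unfolding map_monomials_def by (simp add: sum_product mult_single)
  finally show ?thesis .
qed

definition monomial_image :: "('a \<Rightarrow> 'b \<Rightarrow>\<^sub>0 nat) \<Rightarrow> ('a \<Rightarrow>\<^sub>0 nat) \<Rightarrow> 'b \<Rightarrow>\<^sub>0 nat" where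
  "monomial_image f m =
     (\<Sum>a\<in>Poly_Mapping.keys m. Poly_Mapping.map ((*) (Poly_Mapping.lookup m a)) (f a))"

lemma lookup_map_mult:
  "Poly_Mapping.lookup (Poly_Mapping.map ((*) k) m) a = k * Poly_Mapping.lookup (m :: 'a \<Rightarrow>\<^sub>0 nat) a"
  by (auto simp: map.rep_eq when_def)

lemma lookup_monomial_image:
  "Poly_Mapping.lookup (monomial_image f m) b =
     (\<Sum>a\<in>Poly_Mapping.keys m. Poly_Mapping.lookup m a * Poly_Mapping.lookup (f a) b)"
  unfolding monomial_image_def by (simp add: lookup_sum lookup_map_mult)

lemma monomial_image_add: "monomial_image f (m + m') = monomial_image f m + monomial_image f m'"
proof (rule poly_mapping_eqI)
  fix b
  have "Poly_Mapping.lookup (monomial_image f (m + m')) b =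
        Poly_Mapping.lookup (monomial_image f m) b + Poly_Mapping.lookup (monomial_image f m') b"
    unfolding lookup_monomial_image
    by (rule setsum_keys_plus_distrib) (simp_all add: lookup_add distrib_right)
  then show "Poly_Mapping.lookup (monomial_image f (m + m')) b =
        Poly_Mapping.lookup (monomial_image f m + monomial_image f m') b"
    by (simp add: lookup_add)
qed

lemma monomial_image_monomial [simp]: "monomial_image f (monomial a) = f a"
  by (rule poly_mapping_eqI) (simp add: lookup_monomial_image)

lemma monomial_power: "monomial a ^ k = monomial (Poly_Mapping.map ((*) k) a)"
proof (induction k)
  case (Suc k)
  have "Poly_Mapping.map ((*) (Suc k)) a = a + Poly_Mapping.map ((*) k) a"
    by (rule poly_mapping_eqI) (simp add: lookup_map_mult lookup_add)
  then show ?case unfolding power_Suc Suc.IH mult_single by (simp only: mult_1)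
next
  case 0
  have "Poly_Mapping.map ((*) 0) a = 0"
    by (rule poly_mapping_eqI) (simp add: lookup_map_mult)
  then show ?case by (simp only: power_0) simp
qed

lemma prod_monomial: "(\<Prod>a\<in>A. monomial (f a)) = monomial (\<Sum>a\<in>A. f a)"
  by (induction A rule: infinite_finite_induct) (simp_all add: mult_single)

lemma peval_monomial_substitution:
  fixes p :: "('a, 'k::comm_ring_1) mpoly"
  shows "peval (\<lambda>x. monomial (f x)) p = map_monomials (monomial_image f) p"
  unfolding peval_def map_monomials_def
proof (rule sum.cong[OF refl])
  fix m
  have "(\<Prod>x\<in>Poly_Mapping.keys m. monomial (f x) ^ Poly_Mapping.lookup m x) =
        (monomial (monomial_image f m) :: (_, 'k) mpoly)"
    by (simp add: monomial_power prod_monomial monomial_image_def)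
  then show "Poly_Mapping.single 0 (Poly_Mapping.lookup p m) *
      (\<Prod>x\<in>Poly_Mapping.keys m. monomial (f x) ^ Poly_Mapping.lookup m x) =
      Poly_Mapping.single (monomial_image f m) (Poly_Mapping.lookup p m)"
    by (simp add: mult_single)
qed

lemma mdeg_add: "mdeg (m + m') = mdeg m + mdeg m'"
  unfolding mdeg_def by (rule setsum_keys_plus_distrib) auto

lemma mdeg_single [simp]: "mdeg (Poly_Mapping.single a k) = k"
  unfolding mdeg_def by simp

lemma mdeg_zero [simp]: "mdeg 0 = 0"
  unfolding mdeg_def by simp

lemma mdeg_eq_0_iff: "mdeg m = 0 \<longleftrightarrow> m = 0"
  unfolding mdeg_def by (auto simp: in_keys_iff intro: poly_mapping_eqI)

lemma monomial_split:
  fixes m :: "'a \<Rightarrow>\<^sub>0 nat"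
  assumes "a \<in> Poly_Mapping.keys m"
  shows "m = monomial a + (m - monomial a)"
  using assms
  by (intro poly_mapping_eqI) (auto simp: lookup_add lookup_minus lookup_single when_def in_keys_iff)

lemma mdeg_eq_1_iff: "mdeg (m :: 'a \<Rightarrow>\<^sub>0 nat) = 1 \<longleftrightarrow> (\<exists>a. m = monomial a)"
proof
  assume deg: "mdeg m = 1"
  then obtain a where a: "a \<in> Poly_Mapping.keys m"
    by (metis mdeg_eq_0_iff keys_eq_empty ex_in_conv zero_neq_one)
  have "mdeg m = mdeg (monomial a) + mdeg (m - monomial a)"
    by (subst (1) monomial_split[OF a]) (rule mdeg_add)
  then have "mdeg (m - monomial a) = 0"
    using deg mdeg_single[of a 1] by linarith
  then show "\<exists>a. m = monomial a"
    using monomial_split[OF a] by (auto simp: mdeg_eq_0_iff)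
qed auto

lemma monomial_pair_eq_iff:
  "monomial a + monomial b = (monomial c + monomial d :: 'a \<Rightarrow>\<^sub>0 nat) \<longleftrightarrow>
     (a = c \<and> b = d) \<or> (a = d \<and> b = c)"
proof
  assume eq: "monomial a + monomial b = (monomial c + monomial d :: 'a \<Rightarrow>\<^sub>0 nat)"
  have count: "Poly_Mapping.lookup (monomial a + monomial b) x =
               Poly_Mapping.lookup (monomial c + monomial d :: 'a \<Rightarrow>\<^sub>0 nat) x" for x
    using eq by simp
  show "(a = c \<and> b = d) \<or> (a = d \<and> b = c)"
    using count[of a] count[of b] count[of c]
    by (auto simp: lookup_add lookup_single when_def split: if_splits)
qed (auto simp: add.commute)

lemma poly_in_add: "poly_in X p \<Longrightarrow> poly_in X q \<Longrightarrow> poly_in X (p + q)"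
  unfolding poly_in_def using keys_add[of p q] by blast

lemma poly_in_diff: "poly_in X p \<Longrightarrow> poly_in X q \<Longrightarrow> poly_in X (p - q)"
  unfolding poly_in_def using keys_diff[of p q] by blast

lemma poly_in_mult: "poly_in X p \<Longrightarrow> poly_in X q \<Longrightarrow> poly_in X (p * q)"
  unfolding poly_in_def by (force dest: subsetD[OF keys_mult] simp: keys_add_nat)

lemma poly_in_single: "Poly_Mapping.keys m \<subseteq> X \<Longrightarrow> poly_in X (Poly_Mapping.single m c)"
  unfolding poly_in_def by simp

lemma poly_in_zero [simp]: "poly_in X 0"
  unfolding poly_in_def by simp

lemma poly_in_sum: "(\<And>i. i \<in> I \<Longrightarrow> poly_in X (p i)) \<Longrightarrow> poly_in X (\<Sum>i\<in>I. p i)"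
  by (induction I rule: infinite_finite_induct) (auto intro: poly_in_add)

lemma gen_ideal_add:
  assumes "p \<in> gen_ideal X G" "q \<in> gen_ideal X G"
  shows "p + q \<in> gen_ideal X G"
proof -
  obtain c d where "\<forall>g\<in>G. poly_in X (c g)" "p = (\<Sum>g\<in>G. c g * g)"
    and "\<forall>g\<in>G. poly_in X (d g)" "q = (\<Sum>g\<in>G. d g * g)"
    using assms unfolding gen_ideal_def by blast
  then show ?thesis unfolding gen_ideal_def
    by (intro CollectI exI[of _ "\<lambda>g. c g + d g"]) (simp add: poly_in_add distrib_right sum.distrib)
qed

lemma gen_ideal_mult:
  assumes "poly_in X r" "p \<in> gen_ideal X G"
  shows "r * p \<in> gen_ideal X G"
proof -
  obtain c where "\<forall>g\<in>G. poly_in X (c g)" "p = (\<Sum>g\<in>G. c g * g)"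
    using assms(2) unfolding gen_ideal_def by blast
  with assms(1) show ?thesis unfolding gen_ideal_def
    by (intro CollectI exI[of _ "\<lambda>g. r * c g"]) (simp add: poly_in_mult sum_distrib_left mult.assoc)
qed

lemma gen_ideal_generator:
  assumes "finite G" "g \<in> G"
  shows "g \<in> gen_ideal X G"
  unfolding gen_ideal_def
proof (intro CollectI exI[of _ "\<lambda>h. if h = g then 1 else 0"] conjI)
  have "(\<Sum>h\<in>G. (if h = g then 1 else 0) * h) = (\<Sum>h\<in>G. if h = g then h else 0)"
    by (rule sum.cong) auto
  with assms show "g = (\<Sum>h\<in>G. (if h = g then 1 else 0) * h)"
    by simp
qed (simp add: poly_in_def)

lemma gen_ideal_uminus: "p \<in> gen_ideal X G \<Longrightarrow> - p \<in> gen_ideal X G"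
  using gen_ideal_mult[of X "-1" p G] by (simp add: poly_in_def)

lemma gen_ideal_zero: "0 \<in> gen_ideal X G"
  unfolding gen_ideal_def by (intro CollectI exI[of _ "\<lambda>_. 0"]) (simp add: poly_in_def)

lemma gen_ideal_sum: "(\<And>i. i \<in> I \<Longrightarrow> p i \<in> gen_ideal X G) \<Longrightarrow> (\<Sum>i\<in>I. p i) \<in> gen_ideal X G"
  by (induction I rule: infinite_finite_induct) (auto intro: gen_ideal_add gen_ideal_zero)

lemma gen_ideal_poly_in: "p \<in> gen_ideal X G \<Longrightarrow> \<forall>g\<in>G. poly_in X g \<Longrightarrow> poly_in X p"
  unfolding gen_ideal_def by (auto intro!: poly_in_sum poly_in_mult)

definition monomial_cong :: "('x, 'k::comm_ring_1) mpoly set \<Rightarrow> ('x \<Rightarrow>\<^sub>0 nat) \<Rightarrow> ('x \<Rightarrow>\<^sub>0 nat) \<Rightarrow> bool" where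
  "monomial_cong I m m' \<longleftrightarrow> monomial m - monomial m' \<in> I"

lemma monomial_cong_refl: "monomial_cong (gen_ideal X G) m m"
  unfolding monomial_cong_def by (simp add: gen_ideal_zero)

lemma monomial_cong_sym: "monomial_cong (gen_ideal X G) m m' \<Longrightarrow> monomial_cong (gen_ideal X G) m' m"
  unfolding monomial_cong_def using gen_ideal_uminus by fastforce

lemma monomial_cong_trans:
  "monomial_cong (gen_ideal X G) m m' \<Longrightarrow> monomial_cong (gen_ideal X G) m' m'' \<Longrightarrow>
   monomial_cong (gen_ideal X G) m m''"
  unfolding monomial_cong_def using gen_ideal_add by fastforce

lemma monomial_cong_add:
  fixes G :: "('x, 'k::comm_ring_1) mpoly set"
  assumes "Poly_Mapping.keys k \<subseteq> X" "monomial_cong (gen_ideal X G) m m'"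
  shows "monomial_cong (gen_ideal X G) (k + m) (k + m')"
proof -
  have "monomial (k + m) - monomial (k + m') = monomial k * (monomial m - monomial m' :: (_, 'k) mpoly)"
    by (simp add: right_diff_distrib mult_single)
  then show ?thesis
    using gen_ideal_mult[OF poly_in_single[OF assms(1)]] assms(2) unfolding monomial_cong_def by metis
qed

definition homogeneous_component :: "nat \<Rightarrow> ('x, 'k::zero) mpoly \<Rightarrow> ('x, 'k) mpoly" where
  "homogeneous_component d p =
     Abs_poly_mapping (\<lambda>m. if mdeg m = d then Poly_Mapping.lookup p m else 0)"

lemma lookup_homogeneous_component:
  "Poly_Mapping.lookup (homogeneous_component d p) m = (if mdeg m = d then Poly_Mapping.lookup p m else 0)"
proof -
  have "finite {m. (if mdeg m = d then Poly_Mapping.lookup p m else 0) \<noteq> 0}"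
    by (rule finite_subset[of _ "Poly_Mapping.keys p"]) (auto simp: in_keys_iff)
  then show ?thesis unfolding homogeneous_component_def by simp
qed

lemma homogeneous_component_add:
  "homogeneous_component d (p + q) = homogeneous_component d p + homogeneous_component d q"
  by (rule poly_mapping_eqI) (simp add: lookup_homogeneous_component lookup_add)

lemma homogeneous_component_sum:
  "homogeneous_component d (\<Sum>i\<in>I. p i) = (\<Sum>i\<in>I. homogeneous_component d (p i))"
proof (induction I rule: infinite_finite_induct)
  case (infinite I)
  then show ?case by (simp add: poly_mapping_eqI lookup_homogeneous_component)
qed (simp_all add: homogeneous_component_add poly_mapping_eqI lookup_homogeneous_component)

lemma homogeneous_component_id:
  "\<forall>m\<in>Poly_Mapping.keys p. mdeg m = d \<Longrightarrow> homogeneous_component d p = p"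
  by (rule poly_mapping_eqI) (auto simp: lookup_homogeneous_component in_keys_iff)

lemma homogeneous_component_mult_low:
  fixes c g :: "('x, 'k::comm_ring_1) mpoly"
  assumes low: "\<And>m. mdeg m < d \<Longrightarrow> Poly_Mapping.lookup g m = 0"
  shows "homogeneous_component d (c * g) =
           Poly_Mapping.single 0 (Poly_Mapping.lookup c 0) * homogeneous_component d g"
proof (rule poly_mapping_eqI)
  fix m
  have split: "a + b = m \<longleftrightarrow> a = 0 \<and> b = m"
    if "mdeg m = d" "b \<in> Poly_Mapping.keys g" for a b
  proof
    assume "a + b = m"
    moreover have "\<not> mdeg b < d" using low that(2) by (auto simp: in_keys_iff)
    ultimately show "a = 0 \<and> b = m"
      using that(1) mdeg_add[of a b] by (simp add: mdeg_eq_0_iff)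
  qed simp
  show "Poly_Mapping.lookup (homogeneous_component d (c * g)) m =
        Poly_Mapping.lookup (Poly_Mapping.single 0 (Poly_Mapping.lookup c 0) * homogeneous_component d g) m"
  proof (cases "mdeg m = d")
    case True
    have "Poly_Mapping.lookup (c * g) m =
          (\<Sum>a\<in>Poly_Mapping.keys c. \<Sum>b\<in>Poly_Mapping.keys g.
             if a = 0 \<and> b = m then Poly_Mapping.lookup c a * Poly_Mapping.lookup g b else 0)"
      by (subst (1 2) poly_mapping_sum_single)
        (simp add: sum_product mult_single lookup_sum lookup_single when_def split[OF True] cong: sum.cong)
    also have "\<dots> = (\<Sum>a\<in>Poly_Mapping.keys c.
             if a = 0 then Poly_Mapping.lookup c a * Poly_Mapping.lookup g m else 0)"
      by (intro sum.cong refl) (auto simp: in_keys_iff)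
    also have "\<dots> = Poly_Mapping.lookup c 0 * Poly_Mapping.lookup g m"
      by (simp add: in_keys_iff)
    finally show ?thesis
      using True by (simp add: lookup_homogeneous_component lookup_single_0_mult)
  qed (simp add: lookup_homogeneous_component lookup_single_0_mult)
qed

lemma mpoly_vector_space:
  "vector_space (\<lambda>c (p :: ('x, 'k::field) mpoly). Poly_Mapping.single 0 c * p)"
  by unfold_locales
    (simp_all add: distrib_left distrib_right single_add mult.assoc[symmetric] mult_single)

section \<open>Kernels of monomial maps\<close>

lemma gen_ideal_subset_kernel:
  fixes G :: "('x, 'k::comm_ring_1) mpoly set" and f :: "('x \<Rightarrow>\<^sub>0 nat) \<Rightarrow> 'y::monoid_add"
  assumes additive: "\<And>a b. f (a + b) = f a + f b"
    and G: "\<forall>g\<in>G. map_monomials f g = 0"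
    and p: "p \<in> gen_ideal X G"
  shows "map_monomials f p = 0"
proof -
  obtain c where "p = (\<Sum>g\<in>G. c g * g)"
    using p unfolding gen_ideal_def by blast
  with G show ?thesis
    by (simp add: map_monomials_sum map_monomials_mult[OF additive])
qed

text \<open>Replacing every monomial of \<open>p\<close> by a chosen representative of its fibre under \<open>f\<close>
  gives zero, since the coefficients of \<open>p\<close> sum to zero on each fibre.\<close>

lemma kernel_mem_gen_ideal:
  fixes p :: "('x, 'k::comm_ring_1) mpoly"
  assumes kernel: "map_monomials f p = 0"
    and cong: "\<And>m m'. m \<in> Poly_Mapping.keys p \<Longrightarrow> m' \<in> Poly_Mapping.keys p \<Longrightarrow> f m = f m' \<Longrightarrow>
                 monomial_cong (gen_ideal X G) m m'"
  shows "p \<in> gen_ideal X G"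
proof -
  let ?K = "Poly_Mapping.keys p" and ?c = "Poly_Mapping.lookup p"
  define rep where "rep m = (SOME m'. m' \<in> ?K \<and> f m' = f m)" for m
  have rep: "rep m \<in> ?K \<and> f (rep m) = f m" if "m \<in> ?K" for m
    unfolding rep_def by (rule someI[of _ m]) (use that in simp)
  have rep_eq: "rep m = rep m'" if "f m = f m'" for m m'
    unfolding rep_def using that by simp
  have representatives: "(\<Sum>m\<in>?K. Poly_Mapping.single (rep m) (?c m)) = 0"
  proof (rule poly_mapping_eqI)
    fix n
    have "(\<Sum>m\<in>?K. if rep m = n then ?c m else 0) = 0"
    proof (cases "\<exists>m0\<in>?K. rep m0 = n")
      case True
      then obtain m0 where m0: "m0 \<in> ?K" "rep m0 = n" by blast
      have "(\<Sum>m\<in>?K. if rep m = n then ?c m else 0) = (\<Sum>m\<in>?K. if f m = f m0 then ?c m else 0)"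
        using rep rep_eq m0 by (intro sum.cong refl) metis
      also have "\<dots> = 0"
        using arg_cong[OF kernel, of "\<lambda>q. Poly_Mapping.lookup q (f m0)"] by (simp add: lookup_map_monomials)
      finally show ?thesis .
    qed auto
    then show "Poly_Mapping.lookup (\<Sum>m\<in>?K. Poly_Mapping.single (rep m) (?c m)) n = Poly_Mapping.lookup 0 n"
      by (simp add: lookup_sum lookup_single when_def)
  qed
  have "p = (\<Sum>m\<in>?K. Poly_Mapping.single 0 (?c m) * (monomial m - monomial (rep m)))
            + (\<Sum>m\<in>?K. Poly_Mapping.single (rep m) (?c m))"
    by (subst (1) poly_mapping_sum_single)
      (simp add: right_diff_distrib mult_single flip: sum.distrib)
  also have "\<dots> \<in> gen_ideal X G"
    unfolding representatives add_0_right
  proof (rule gen_ideal_sum, rule gen_ideal_mult)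
    fix m assume "m \<in> ?K"
    then show "monomial m - monomial (rep m) \<in> gen_ideal X G"
      using cong rep unfolding monomial_cong_def by simp
  qed (simp add: poly_in_def)
  finally show ?thesis .
qed

section \<open>The cut ideal of a tree\<close>

definition cut_exponent :: "'v set set \<Rightarrow> 'v set set \<Rightarrow> ('v set \<times> bool) \<Rightarrow>\<^sub>0 nat" where
  "cut_exponent E P = (\<Sum>e\<in>cut E P. monomial (e, True)) + (\<Sum>e\<in>E - cut E P. monomial (e, False))"

lemma cut_image_eq_monomial: "cut_image E P = monomial (cut_exponent E P)"
  unfolding cut_image_def cut_exponent_def mvar_def by (simp add: prod_monomial mult_single)

lemma cut_ideal_eq_kernel:
  "cut_ideal V E =
     {p. poly_in (unordered_partitions V) p \<and> map_monomials (monomial_image (cut_exponent E)) p = 0}"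
  unfolding cut_ideal_def cut_image_eq_monomial[abs_def] peval_monomial_substitution ..

lemma lookup_cut_exponent:
  assumes "finite E"
  shows "Poly_Mapping.lookup (cut_exponent E P) (e, b) = (if e \<in> E \<and> (e \<in> cut E P) = b then 1 else 0)"
  using assms cut_subset[of E P] unfolding cut_exponent_def
  by (cases b) (auto simp: lookup_add lookup_sum lookup_single when_def finite_subset)

locale tree_cut_ideal =
  fixes V :: "'v set" and E :: "'v set set"
  assumes tree: "is_tree V E" and edges_nonempty: "E \<noteq> {}"
begin

abbreviation partitions :: "'v set set set" where
  "partitions \<equiv> unordered_partitions V"

abbreviation image_exponent :: "('v set set \<Rightarrow>\<^sub>0 nat) \<Rightarrow> ('v set \<times> bool) \<Rightarrow>\<^sub>0 nat" where
  "image_exponent \<equiv> monomial_image (cut_exponent E)"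

definition partition_of_cut :: "'v set set \<Rightarrow> 'v set set" where
  "partition_of_cut S = inv_into partitions (cut E) S"

lemma finite_edges: "finite E"
  using tree simple_graph_finite_edges unfolding is_tree_def by blast

lemma partition_of_cut_mem: "S \<subseteq> E \<Longrightarrow> partition_of_cut S \<in> partitions"
  unfolding partition_of_cut_def using tree_bij_betw_cut[OF tree]
  by (metis PowI bij_betw_def inv_into_into)

lemma cut_partition_of_cut: "S \<subseteq> E \<Longrightarrow> cut E (partition_of_cut S) = S"
  unfolding partition_of_cut_def using tree_bij_betw_cut[OF tree]
  by (meson PowI bij_betw_inv_into_right)

lemma partition_of_cut_cut: "P \<in> partitions \<Longrightarrow> partition_of_cut (cut E P) = P"
  unfolding partition_of_cut_def using tree_bij_betw_cut[OF tree] by (simp add: bij_betw_def)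

lemma partition_of_cut_eq_iff:
  "S \<subseteq> E \<Longrightarrow> T \<subseteq> E \<Longrightarrow> partition_of_cut S = partition_of_cut T \<longleftrightarrow> S = T"
  using cut_partition_of_cut by metis

lemma cut_exponent_inj:
  assumes "P \<in> partitions" "Q \<in> partitions" "cut_exponent E P = cut_exponent E Q"
  shows "P = Q"
proof -
  have "e \<in> cut E P \<longleftrightarrow> e \<in> cut E Q" for e
    using arg_cong[OF assms(3), of "\<lambda>m. Poly_Mapping.lookup m (e, True)"]
      cut_subset[of E P] cut_subset[of E Q]
    by (auto simp: lookup_cut_exponent[OF finite_edges] split: if_splits)
  then have "cut E P = cut E Q" by blast
  then show ?thesis
    using partition_of_cut_cut[OF assms(1)] partition_of_cut_cut[OF assms(2)] by metis
qed

text \<open>Each variable contributes exactly one of \<open>s_e\<close> and \<open>t_e\<close> to the image.\<close>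

lemma image_exponent_degree:
  assumes "e \<in> E"
  shows "Poly_Mapping.lookup (image_exponent m) (e, True) + Poly_Mapping.lookup (image_exponent m) (e, False)
         = mdeg m"
  using assms unfolding mdeg_def
  by (auto simp: lookup_monomial_image lookup_cut_exponent[OF finite_edges] simp flip: sum.distrib
      intro!: sum.cong)

lemma mdeg_eq_if_image_exponent_eq: "image_exponent m = image_exponent m' \<Longrightarrow> mdeg m = mdeg m'"
  using image_exponent_degree edges_nonempty by (metis ex_in_conv)

lemma cut_exponent_union_inter:
  assumes "S \<subseteq> E" "T \<subseteq> E"
  shows "cut_exponent E (partition_of_cut S) + cut_exponent E (partition_of_cut T) =
         cut_exponent E (partition_of_cut (S \<union> T)) + cut_exponent E (partition_of_cut (S \<inter> T))"
proof (rule poly_mapping_eqI)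
  fix y :: "'v set \<times> bool"
  obtain e b where y: "y = (e, b)" by (cases y)
  have "S \<union> T \<subseteq> E" "S \<inter> T \<subseteq> E" using assms by auto
  then show "Poly_Mapping.lookup (cut_exponent E (partition_of_cut S) + cut_exponent E (partition_of_cut T)) y =
        Poly_Mapping.lookup (cut_exponent E (partition_of_cut (S \<union> T)) +
                             cut_exponent E (partition_of_cut (S \<inter> T))) y"
    using assms unfolding y
    by (simp add: lookup_add lookup_cut_exponent[OF finite_edges] cut_partition_of_cut)
qed


definition cut_union :: "('v set set \<Rightarrow>\<^sub>0 nat) \<Rightarrow> 'v set set" where
  "cut_union m = \<Union> (cut E ` Poly_Mapping.keys m)"

lemma cut_union_subset: "cut_union m \<subseteq> E"
  unfolding cut_union_def using cut_subset by blast

lemma cut_union_add: "cut_union (m + m') = cut_union m \<union> cut_union m'"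
  unfolding cut_union_def by (simp add: keys_add_nat)

lemma cut_union_single [simp]: "cut_union (Poly_Mapping.single P k) = (if k = 0 then {} else cut E P)"
  unfolding cut_union_def by simp

lemma mem_cut_union_iff:
  "e \<in> cut_union m \<longleftrightarrow> e \<in> E \<and> Poly_Mapping.lookup (image_exponent m) (e, True) \<noteq> 0"
proof -
  have "Poly_Mapping.lookup (image_exponent m) (e, True) =
        (\<Sum>P\<in>Poly_Mapping.keys m. if e \<in> E \<and> e \<in> cut E P then Poly_Mapping.lookup m P else 0)"
    by (auto simp: lookup_monomial_image lookup_cut_exponent[OF finite_edges] intro!: sum.cong)
  also have "\<dots> \<noteq> 0 \<longleftrightarrow> (\<exists>P\<in>Poly_Mapping.keys m. e \<in> E \<and> e \<in> cut E P)"
    using not_in_keys_iff_lookup_eq_zero by force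
  finally show ?thesis
    unfolding cut_union_def using cut_subset[of E] by blast
qed

lemma cut_union_eq_if_image_exponent_eq:
  "image_exponent m = image_exponent m' \<Longrightarrow> cut_union m = cut_union m'"
  by (simp add: set_eq_iff mem_cut_union_iff)

definition pair_exponent :: "'v set set \<Rightarrow> 'v set set \<Rightarrow> 'v set set \<Rightarrow>\<^sub>0 nat" where
  "pair_exponent S T = monomial (partition_of_cut S) + monomial (partition_of_cut T)"

definition cut_binomial :: "'v set set \<Rightarrow> 'v set set \<Rightarrow> ('v set set, 'k::comm_ring_1) mpoly" where
  "cut_binomial S T = monomial (pair_exponent S T) - monomial (pair_exponent (S \<union> T) (S \<inter> T))"

definition incomparable_pairs :: "('v set set \<times> 'v set set) set" where
  "incomparable_pairs = {(S, T). S \<subseteq> E \<and> T \<subseteq> E \<and> \<not> S \<subseteq> T \<and> \<not> T \<subseteq> S}"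

definition cut_binomials :: "('v set set, 'k::comm_ring_1) mpoly set" where
  "cut_binomials = (\<lambda>(S, T). cut_binomial S T) ` incomparable_pairs"

abbreviation binomial_ideal :: "('v set set, 'k::comm_ring_1) mpoly set" where
  "binomial_ideal \<equiv> gen_ideal partitions cut_binomials"

lemma finite_incomparable_pairs: "finite incomparable_pairs"
  by (rule finite_subset[of _ "Pow E \<times> Pow E"]) (auto simp: incomparable_pairs_def finite_edges)

lemma finite_cut_binomials: "finite cut_binomials"
  unfolding cut_binomials_def using finite_incomparable_pairs by simp

lemma keys_pair_exponent: "S \<subseteq> E \<Longrightarrow> T \<subseteq> E \<Longrightarrow> Poly_Mapping.keys (pair_exponent S T) \<subseteq> partitions"
  unfolding pair_exponent_def by (auto simp: keys_add_nat intro!: partition_of_cut_mem)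

lemma pair_exponent_eq_iff:
  assumes "S \<subseteq> E" "T \<subseteq> E" "S' \<subseteq> E" "T' \<subseteq> E"
  shows "pair_exponent S T = pair_exponent S' T' \<longleftrightarrow> (S = S' \<and> T = T') \<or> (S = T' \<and> T = S')"
  using assms unfolding pair_exponent_def monomial_pair_eq_iff by (simp add: partition_of_cut_eq_iff)

lemma image_exponent_pair_exponent:
  "S \<subseteq> E \<Longrightarrow> T \<subseteq> E \<Longrightarrow>
   image_exponent (pair_exponent S T) = image_exponent (pair_exponent (S \<union> T) (S \<inter> T))"
  unfolding pair_exponent_def monomial_image_add monomial_image_monomial
  by (rule cut_exponent_union_inter)

lemma cut_binomial_mem_cut_ideal:
  assumes "(S, T) \<in> incomparable_pairs"
  shows "cut_binomial S T \<in> cut_ideal V E"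
proof -
  have "S \<subseteq> E" "T \<subseteq> E" "S \<union> T \<subseteq> E" "S \<inter> T \<subseteq> E"
    using assms unfolding incomparable_pairs_def by auto
  then show ?thesis
    unfolding cut_ideal_eq_kernel cut_binomial_def
    by (simp add: poly_in_diff poly_in_single keys_pair_exponent map_monomials_diff
        image_exponent_pair_exponent)
qed

lemma cut_binomial_quadric:
  assumes "(S, T) \<in> incomparable_pairs"
  shows "quadric (cut_binomial S T :: ('v set set, 'k::comm_ring_1) mpoly)"
proof -
  let ?g = "cut_binomial S T :: ('v set set, 'k) mpoly"
  have "S \<subseteq> E" "T \<subseteq> E" "S \<union> T \<subseteq> E" "S \<inter> T \<subseteq> E" "\<not> S \<subseteq> T" "\<not> T \<subseteq> S"
    using assms unfolding incomparable_pairs_def by auto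
  then have "pair_exponent S T \<noteq> pair_exponent (S \<union> T) (S \<inter> T)"
    by (auto simp: pair_exponent_eq_iff)
  then have "Poly_Mapping.lookup ?g (pair_exponent S T) = 1"
    by (simp add: cut_binomial_def lookup_minus lookup_single when_def)
  moreover have "Poly_Mapping.keys ?g \<subseteq> {pair_exponent S T, pair_exponent (S \<union> T) (S \<inter> T)}"
    unfolding cut_binomial_def using keys_diff by fastforce
  moreover have "mdeg (pair_exponent S' T') = 2" for S' T'
    by (simp add: pair_exponent_def mdeg_add)
  ultimately show ?thesis
    unfolding quadric_def by fastforce
qed


lemma binomial_ideal_subset_cut_ideal:
  "(binomial_ideal :: ('v set set, 'k::comm_ring_1) mpoly set) \<subseteq> cut_ideal V E"
proof
  fix p :: "('v set set, 'k) mpoly"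
  assume p: "p \<in> binomial_ideal"
  have "\<forall>g\<in>cut_binomials. (g :: ('v set set, 'k) mpoly) \<in> cut_ideal V E"
    unfolding cut_binomials_def using cut_binomial_mem_cut_ideal by auto
  then show "p \<in> cut_ideal V E"
    using gen_ideal_poly_in[OF p] gen_ideal_subset_kernel[where f = image_exponent, OF monomial_image_add _ p]
    unfolding cut_ideal_eq_kernel by auto
qed

lemma image_exponent_eq_if_monomial_cong:
  assumes "monomial_cong (binomial_ideal :: ('v set set, 'k::comm_ring_1) mpoly set) m m'"
  shows "image_exponent m = image_exponent m'"
proof -
  have "map_monomials image_exponent (monomial m - monomial m' :: ('v set set, 'k) mpoly) = 0"
    using assms binomial_ideal_subset_cut_ideal unfolding monomial_cong_def cut_ideal_eq_kernel by blast
  then have "(monomial (image_exponent m) :: (_, 'k) mpoly) = monomial (image_exponent m')"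
    by (simp add: map_monomials_diff)
  then show ?thesis
    by (metis lookup_single_eq lookup_single_not_eq zero_neq_one)
qed

lemma monomial_cong_union_inter:
  assumes P: "P \<in> partitions" and Q: "Q \<in> partitions"
  shows "monomial_cong (binomial_ideal :: ('v set set, 'k::comm_ring_1) mpoly set)
           (monomial P + monomial Q) (pair_exponent (cut E P \<union> cut E Q) (cut E P \<inter> cut E Q))"
proof (cases "cut E P \<subseteq> cut E Q \<or> cut E Q \<subseteq> cut E P")
  case True
  then have "pair_exponent (cut E P \<union> cut E Q) (cut E P \<inter> cut E Q) = monomial P + monomial Q"
    using partition_of_cut_cut[OF P] partition_of_cut_cut[OF Q]
    by (auto simp: pair_exponent_def Un_absorb1 Un_absorb2 Int_absorb1 Int_absorb2 add.commute)
  then show ?thesis by (simp add: monomial_cong_refl)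
next
  case False
  then have "(cut E P, cut E Q) \<in> incomparable_pairs"
    using cut_subset unfolding incomparable_pairs_def by auto
  then have "cut_binomial (cut E P) (cut E Q) \<in> (cut_binomials :: ('v set set, 'k) mpoly set)"
    unfolding cut_binomials_def by auto
  then have "cut_binomial (cut E P) (cut E Q) \<in> (binomial_ideal :: ('v set set, 'k) mpoly set)"
    by (rule gen_ideal_generator[OF finite_cut_binomials])
  then show ?thesis
    unfolding monomial_cong_def cut_binomial_def pair_exponent_def
    by (simp add: partition_of_cut_cut[OF P] partition_of_cut_cut[OF Q])
qed

text \<open>Trading \<open>q_P q_Q\<close> for the variables indexed by the union and the intersection of their cuts,
  one variable at a time, collects the union of all cuts into a single variable.\<close>

lemma monomial_cong_cut_union_factor:
  assumes "Poly_Mapping.keys m \<subseteq> partitions" "m \<noteq> 0"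
  shows "\<exists>r. Poly_Mapping.keys r \<subseteq> partitions \<and>
           monomial_cong (binomial_ideal :: ('v set set, 'k::comm_ring_1) mpoly set)
             m (monomial (partition_of_cut (cut_union m)) + r)"
  using assms
proof (induction "mdeg m" arbitrary: m rule: less_induct)
  case less
  let ?I = "binomial_ideal :: ('v set set, 'k) mpoly set"
  obtain P where P: "P \<in> Poly_Mapping.keys m" using less.prems(2) by fastforce
  define m0 where "m0 = m - monomial P"
  have m: "m = monomial P + m0" unfolding m0_def by (rule monomial_split[OF P])
  have P_part: "P \<in> partitions" and m0_part: "Poly_Mapping.keys m0 \<subseteq> partitions"
    using less.prems(1) P by (auto simp: m keys_add_nat)
  show ?case
  proof (cases "m0 = 0")
    case True
    then show ?thesis
      using m P_part by (intro exI[of _ 0]) (simp add: partition_of_cut_cut monomial_cong_refl)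
  next
    case False
    define Q where "Q = partition_of_cut (cut_union m0)"
    have "mdeg m0 < mdeg m" using m by (simp add: mdeg_add)
    then obtain r0 where r0: "Poly_Mapping.keys r0 \<subseteq> partitions" "monomial_cong ?I m0 (monomial Q + r0)"
      using less.hyps m0_part False unfolding Q_def by blast
    have Q_part: "Q \<in> partitions" and cut_Q: "cut E Q = cut_union m0"
      unfolding Q_def using cut_union_subset partition_of_cut_mem cut_partition_of_cut by auto
    have union: "cut_union m = cut E P \<union> cut E Q"
      unfolding m cut_union_add cut_Q by simp
    define Z where "Z = partition_of_cut (cut E P \<inter> cut E Q)"
    have Z_part: "Z \<in> partitions"
      unfolding Z_def using cut_subset by (intro partition_of_cut_mem) auto
    have "monomial_cong ?I m (monomial P + (monomial Q + r0))"
      using monomial_cong_add[OF _ r0(2), of "monomial P"] P_part unfolding m by simp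
    moreover have "monomial_cong ?I (r0 + (monomial P + monomial Q))
                     (r0 + (monomial (partition_of_cut (cut_union m)) + monomial Z))"
      using monomial_cong_add[OF r0(1) monomial_cong_union_inter[OF P_part Q_part]]
      unfolding union Z_def pair_exponent_def .
    ultimately have "monomial_cong ?I m (monomial (partition_of_cut (cut_union m)) + (monomial Z + r0))"
      by (auto simp: ac_simps intro: monomial_cong_trans)
    then show ?thesis
      using Z_part r0(1) by (intro exI[of _ "monomial Z + r0"]) (auto simp: keys_add_nat)
  qed
qed

lemma monomial_cong_if_image_exponent_eq:
  assumes "Poly_Mapping.keys m \<subseteq> partitions" "Poly_Mapping.keys m' \<subseteq> partitions"
    and "image_exponent m = image_exponent m'"
  shows "monomial_cong (binomial_ideal :: ('v set set, 'k::comm_ring_1) mpoly set) m m'"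
  using assms
proof (induction "mdeg m" arbitrary: m m' rule: less_induct)
  case less
  let ?I = "binomial_ideal :: ('v set set, 'k) mpoly set"
  show ?case
  proof (cases "m = 0")
    case True
    then have "m' = 0"
      using mdeg_eq_if_image_exponent_eq[OF less.prems(3)] by (simp add: mdeg_eq_0_iff)
    with True show ?thesis by (simp add: monomial_cong_refl)
  next
    case False
    then have "m' \<noteq> 0"
      using mdeg_eq_if_image_exponent_eq[OF less.prems(3)] by (auto simp: mdeg_eq_0_iff)
    let ?U = "monomial (partition_of_cut (cut_union m))"
    have same_union: "cut_union m' = cut_union m"
      using cut_union_eq_if_image_exponent_eq[OF less.prems(3)] by simp
    obtain r where r: "Poly_Mapping.keys r \<subseteq> partitions" "monomial_cong ?I m (?U + r)"
      using monomial_cong_cut_union_factor[OF less.prems(1) False] by blast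
    obtain r' where r': "Poly_Mapping.keys r' \<subseteq> partitions" "monomial_cong ?I m' (?U + r')"
      using monomial_cong_cut_union_factor[OF less.prems(2) \<open>m' \<noteq> 0\<close>] same_union by auto
    have image_r: "image_exponent m = image_exponent (?U + r)"
      using image_exponent_eq_if_monomial_cong[OF r(2)] .
    then have "image_exponent r = image_exponent r'"
      using image_exponent_eq_if_monomial_cong[OF r'(2)] less.prems(3) by (simp add: monomial_image_add)
    moreover have "mdeg r < mdeg m"
      using mdeg_eq_if_image_exponent_eq[OF image_r] by (simp add: mdeg_add)
    ultimately have "monomial_cong ?I r r'"
      using less.hyps r(1) r'(1) by blast
    then have "monomial_cong ?I (?U + r) (?U + r')"
      using partition_of_cut_mem[OF cut_union_subset] by (intro monomial_cong_add) auto
    then show ?thesis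
      using r(2) r'(2) monomial_cong_trans monomial_cong_sym by blast
  qed
qed

theorem cut_ideal_eq_binomial_ideal:
  "cut_ideal V E = (binomial_ideal :: ('v set set, 'k::comm_ring_1) mpoly set)"
proof
  show "cut_ideal V E \<subseteq> (binomial_ideal :: ('v set set, 'k) mpoly set)"
  proof
    fix p :: "('v set set, 'k) mpoly"
    assume "p \<in> cut_ideal V E"
    then have p: "poly_in partitions p" and kernel: "map_monomials image_exponent p = 0"
      unfolding cut_ideal_eq_kernel by auto
    show "p \<in> binomial_ideal"
    proof (rule kernel_mem_gen_ideal[OF kernel])
      fix m m' assume "m \<in> Poly_Mapping.keys p" "m' \<in> Poly_Mapping.keys p"
        "image_exponent m = image_exponent m'"
      with p show "monomial_cong binomial_ideal m m'"
        unfolding poly_in_def by (blast intro: monomial_cong_if_image_exponent_eq)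
    qed
  qed
qed (rule binomial_ideal_subset_cut_ideal)

section \<open>Minimal generating sets of the cut ideal\<close>

lemma image_exponent_inj_low_degree:
  assumes "Poly_Mapping.keys m \<subseteq> partitions" "Poly_Mapping.keys m' \<subseteq> partitions"
    and "image_exponent m' = image_exponent m" "mdeg m < 2"
  shows "m' = m"
proof -
  have deg: "mdeg m' = mdeg m" using mdeg_eq_if_image_exponent_eq[OF assms(3)] .
  show ?thesis
  proof (cases "mdeg m = 0")
    case True
    then show ?thesis using deg by (simp add: mdeg_eq_0_iff)
  next
    case False
    then have "mdeg m = 1" "mdeg m' = 1" using assms(4) deg by linarith+
    then obtain P Q where m: "m = monomial P" and m': "m' = monomial Q"
      unfolding mdeg_eq_1_iff by blast
    have "P \<in> partitions" "Q \<in> partitions" using assms(1,2) unfolding m m' by simp_all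
    moreover have "cut_exponent E Q = cut_exponent E P"
      using assms(3) unfolding m m' monomial_image_monomial .
    ultimately show ?thesis unfolding m m' using cut_exponent_inj by blast
  qed
qed

lemma cut_ideal_low_degree_vanish:
  assumes g: "g \<in> cut_ideal V E" and m: "mdeg m < 2"
  shows "Poly_Mapping.lookup g m = 0"
proof (cases "m \<in> Poly_Mapping.keys g")
  case True
  have g_poly: "poly_in partitions g" and g_kernel: "map_monomials image_exponent g = 0"
    using g unfolding cut_ideal_eq_kernel by auto
  have "m' \<in> Poly_Mapping.keys g \<Longrightarrow> image_exponent m' = image_exponent m \<longleftrightarrow> m' = m" for m'
    using g_poly True image_exponent_inj_low_degree[OF _ _ _ m] unfolding poly_in_def by blast
  then have "Poly_Mapping.lookup (map_monomials image_exponent g) (image_exponent m) = Poly_Mapping.lookup g m"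
    using True by (simp add: lookup_map_monomials cong: sum.cong)
  then show ?thesis using g_kernel by simp
qed (simp add: in_keys_iff)

lemma cut_binomial_sym: "cut_binomial T S = cut_binomial S T"
  unfolding cut_binomial_def pair_exponent_def by (simp add: add.commute Un_commute Int_commute)

lemma lookup_cut_binomial_pair_exponent:
  assumes ST: "(S, T) \<in> incomparable_pairs" and ST': "(S', T') \<in> incomparable_pairs"
  shows "Poly_Mapping.lookup (cut_binomial S' T' :: ('v set set, 'k::comm_ring_1) mpoly) (pair_exponent S T) =
         (if (S' = S \<and> T' = T) \<or> (S' = T \<and> T' = S) then 1 else 0)"
proof -
  have subsets: "S \<subseteq> E" "T \<subseteq> E" "S' \<subseteq> E" "T' \<subseteq> E" "S' \<union> T' \<subseteq> E" "S' \<inter> T' \<subseteq> E"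
    using ST ST' unfolding incomparable_pairs_def by auto
  have "pair_exponent (S' \<union> T') (S' \<inter> T') \<noteq> pair_exponent S T"
    using ST subsets unfolding incomparable_pairs_def by (auto simp: pair_exponent_eq_iff)
  then show ?thesis
    using subsets
    by (auto simp: cut_binomial_def lookup_minus lookup_single when_def pair_exponent_eq_iff)
qed

lemma cut_binomial_eq_iff:
  assumes ST: "(S, T) \<in> incomparable_pairs" and ST': "(S', T') \<in> incomparable_pairs"
  shows "(cut_binomial S' T' :: ('v set set, 'k::comm_ring_1) mpoly) = cut_binomial S T \<longleftrightarrow>
         (S' = S \<and> T' = T) \<or> (S' = T \<and> T' = S)"
proof
  assume "(cut_binomial S' T' :: ('v set set, 'k) mpoly) = cut_binomial S T"
  then have "Poly_Mapping.lookup (cut_binomial S' T' :: ('v set set, 'k) mpoly) (pair_exponent S T) \<noteq> 0"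
    using lookup_cut_binomial_pair_exponent[OF ST ST, where 'k = 'k] by simp
  then show "(S' = S \<and> T' = T) \<or> (S' = T \<and> T' = S)"
    unfolding lookup_cut_binomial_pair_exponent[OF ST ST'] by (simp split: if_splits)
qed (use cut_binomial_sym in metis)

lemma lookup_cut_binomials_pair_exponent:
  fixes g :: "('v set set, 'k::comm_ring_1) mpoly"
  assumes ST: "(S, T) \<in> incomparable_pairs" and g: "g \<in> cut_binomials"
  shows "Poly_Mapping.lookup g (pair_exponent S T) = (if g = cut_binomial S T then 1 else 0)"
proof -
  obtain S' T' where ST': "(S', T') \<in> incomparable_pairs" "g = cut_binomial S' T'"
    using g unfolding cut_binomials_def by auto
  then show ?thesis
    using lookup_cut_binomial_pair_exponent[OF ST ST'(1), where 'k = 'k]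
      cut_binomial_eq_iff[OF ST ST'(1), where 'k = 'k]
    by simp
qed

lemma cut_binomials_linearly_independent:
  fixes a :: "('v set set, 'k::comm_ring_1) mpoly \<Rightarrow> 'k"
  assumes sum: "(\<Sum>h\<in>cut_binomials. Poly_Mapping.single 0 (a h) * h) = 0" and g: "g \<in> cut_binomials"
  shows "a g = 0"
proof -
  obtain S T where ST: "(S, T) \<in> incomparable_pairs" "g = cut_binomial S T"
    using g unfolding cut_binomials_def by auto
  have "0 = Poly_Mapping.lookup (\<Sum>h\<in>cut_binomials. Poly_Mapping.single 0 (a h) * h) (pair_exponent S T)"
    using sum by simp
  also have "\<dots> = (\<Sum>h\<in>cut_binomials. if h = g then a h else 0)"
    unfolding lookup_sum lookup_single_0_mult ST(2)
    by (intro sum.cong refl) (simp add: lookup_cut_binomials_pair_exponent[OF ST(1)])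
  also have "\<dots> = a g"
    using g by (simp add: finite_cut_binomials)
  finally show "a g = 0" by simp
qed

text \<open>Since the ideal has no terms of degree below two, the quadratic parts of the generators span
  the binomials.\<close>

lemma card_cut_binomials_le:
  fixes G :: "('v set set, 'k::field) mpoly set"
  assumes fin: "finite G" and gen: "gen_ideal partitions G = cut_ideal V E"
  shows "card (cut_binomials :: ('v set set, 'k) mpoly set) \<le> card G"
proof -
  interpret VS: vector_space "\<lambda>c (p :: ('v set set, 'k) mpoly). Poly_Mapping.single 0 c * p"
    by (rule mpoly_vector_space)
  have G_ideal: "g \<in> cut_ideal V E" if "g \<in> G" for g
    using gen_ideal_generator[OF fin that, of partitions] gen by simp
  have "cut_binomials \<subseteq> VS.span (homogeneous_component 2 ` G)"
  proof
    fix h :: "('v set set, 'k) mpoly" assume h: "h \<in> cut_binomials"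
    then have "h \<in> gen_ideal partitions G"
      using gen cut_ideal_eq_binomial_ideal gen_ideal_generator[OF finite_cut_binomials] by blast
    then obtain c where c: "h = (\<Sum>g\<in>G. c g * g)" unfolding gen_ideal_def by blast
    have "h = homogeneous_component 2 h"
      using h cut_binomial_quadric unfolding cut_binomials_def quadric_def
      by (auto intro!: homogeneous_component_id[symmetric])
    also have "\<dots> = (\<Sum>g\<in>G. Poly_Mapping.single 0 (Poly_Mapping.lookup (c g) 0) * homogeneous_component 2 g)"
      unfolding c homogeneous_component_sum
      by (auto intro!: sum.cong homogeneous_component_mult_low cut_ideal_low_degree_vanish G_ideal)
    also have "\<dots> \<in> VS.span (homogeneous_component 2 ` G)"
      by (intro VS.span_sum VS.span_scale VS.span_base) simp
    finally show "h \<in> VS.span (homogeneous_component 2 ` G)" .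
  qed
  moreover have "VS.independent (cut_binomials :: ('v set set, 'k) mpoly set)"
  proof (rule VS.independent_if_scalars_zero[OF finite_cut_binomials])
    fix a :: "('v set set, 'k) mpoly \<Rightarrow> 'k" and g
    assume "(\<Sum>h\<in>cut_binomials. Poly_Mapping.single 0 (a h) * h) = 0"
      "g \<in> (cut_binomials :: ('v set set, 'k) mpoly set)"
    then show "a g = 0" by (rule cut_binomials_linearly_independent)
  qed
  ultimately have "card (cut_binomials :: ('v set set, 'k) mpoly set) \<le> card (homogeneous_component 2 ` G)"
    using VS.independent_span_bound[OF finite_imageI[OF fin]] by simp
  also have "\<dots> \<le> card G"
    using fin by (rule card_image_le)
  finally show ?thesis .
qed

lemma card_incomparable_pairs:
  "card incomparable_pairs = 2 * card (cut_binomials :: ('v set set, 'k::comm_ring_1) mpoly set)"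
proof -
  let ?f = "(\<lambda>(S, T). cut_binomial S T) :: _ \<Rightarrow> ('v set set, 'k) mpoly"
  have fibre: "{x \<in> incomparable_pairs. ?f x = ?f (S, T)} = {(S, T), (T, S)}"
    if ST: "(S, T) \<in> incomparable_pairs" for S T
  proof -
    have "(T, S) \<in> incomparable_pairs" using ST unfolding incomparable_pairs_def by auto
    then show ?thesis
      using ST cut_binomial_eq_iff[OF ST, where 'k = 'k] by auto
  qed
  have "card incomparable_pairs = (\<Sum>g\<in>cut_binomials. card {x \<in> incomparable_pairs. ?f x = g})"
    unfolding card_eq_sum cut_binomials_def by (rule sum.image_gen[OF finite_incomparable_pairs])
  also have "\<dots> = (\<Sum>g\<in>(cut_binomials :: ('v set set, 'k) mpoly set). 2)"
  proof (rule sum.cong[OF refl])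
    fix g assume "g \<in> (cut_binomials :: ('v set set, 'k) mpoly set)"
    then obtain S T where ST: "(S, T) \<in> incomparable_pairs" "g = ?f (S, T)"
      unfolding cut_binomials_def by auto
    moreover have "S \<noteq> T" using ST unfolding incomparable_pairs_def by auto
    ultimately show "card {x \<in> incomparable_pairs. ?f x = g} = 2"
      using fibre by simp
  qed
  finally show ?thesis by simp
qed

lemma card_cut_binomials:
  "card (cut_binomials :: ('v set set, 'k::comm_ring_1) mpoly set) + 3 ^ card E =
   2 * 4 ^ (card E - 1) + 2 ^ (card E - 1)"
proof -
  obtain n where n: "card E = Suc n"
    using finite_edges edges_nonempty by (metis card_gt_0_iff gr0_implies_Suc)
  show ?thesis
    using card_incomparable_subset_pairs[OF finite_edges]
      card_incomparable_pairs[where 'k = 'k]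
    unfolding incomparable_pairs_def n by simp
qed

end

theorem corollary4p2:
  fixes V :: "'v set" and E :: "'v set set" and n :: nat
  assumes "is_tree V E" and "card E = n" and "n \<ge> 1"
  shows "minimally_generated_by_quadrics (unordered_partitions V)
           (cut_ideal V E :: ('v set set, 'k::field) mpoly set)
           (nat (2 * 4 ^ (n - 1) + 2 ^ (n - 1) - 3 ^ n))"
proof -
  interpret tree_cut_ideal V E
    using assms by unfold_locales auto
  have "int (card (cut_binomials :: ('v set set, 'k) mpoly set)) + 3 ^ n = 2 * 4 ^ (n - 1) + 2 ^ (n - 1)"
    using arg_cong[OF card_cut_binomials[where 'k = 'k], of int] assms(2) by simp
  then have "int (card (cut_binomials :: ('v set set, 'k) mpoly set)) = 2 * 4 ^ (n - 1) + 2 ^ (n - 1) - 3 ^ n"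
    by linarith
  moreover have "\<forall>g\<in>(cut_binomials :: ('v set set, 'k) mpoly set). quadric g \<and> poly_in partitions g"
    using cut_binomial_quadric cut_binomial_mem_cut_ideal unfolding cut_binomials_def cut_ideal_eq_kernel
    by auto
  ultimately show ?thesis
    unfolding minimally_generated_by_quadrics_def
    using finite_cut_binomials cut_ideal_eq_binomial_ideal card_cut_binomials_le by (metis nat_int)
qed

end
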